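(* Let $\alpha>-1$, $M\ge0$, and for $n=0,1,2,\ldots$ let $$y(x)=P_n^{\alpha,\alpha,M,M}(x)=C_0P_n^{(\alpha,\alpha)}(x)-C_1x\frac{d}{dx}P_n^{(\alpha,\alpha)}(x),$$ where $$C_0=1+M\frac{2n}{\alpha+1}\binom{n+2\alpha+1}{n}+4M^2\binom{n+2\alpha+1}{n-1}^2,\qquad C_1=\frac{2M}{2\alpha+1}\binom{n+2\alpha}{n}+\frac{2M^2}{\alpha+1}\binom{n+2\alpha}{n-1}\binom{n+2\alpha+1}{n}.$$ Define $b_0(x)=b_0(n,\alpha,x)=\frac12\left[1-(-1)^n\right]$ and $b_i(x)=\frac{2^{i-1}}{i!}(-x)^i$ for $i=1,2,3,\ldots$. Then $$\sum_{i=0}^{\infty}b_i(x)y^{(i)}(x)=0 .$$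
   Context: $P_n^{(\alpha,\beta)}(x)$ denotes the classical Jacobi polynomial, orthogonal on $[-1,1]$ with respect to $(1-x)^\alpha(1+x)^\beta$ and normalized by $P_n^{(\alpha,\beta)}(1)=\binom{n+\alpha}{n}$. Binomial coefficients $\binom{a}{m}$ are generalized (real $a$), with $\binom{a}{m}=0$ for negative integers $m$. The polynomials $P_n^{\alpha,\alpha,M,M}$ are the generalized (Koornwinder) Jacobi polynomials orthogonal on $[-1,1]$ with respect to the normalized weight $\frac{\Gamma(2\alpha+2)}{2^{2\alpha+1}\Gamma(\alpha+1)^2}(1-x^2)^\alpha+M\delta(x+1)+M\delta(x-1)$. Since $y$ is a polynomial, the sum is finite. *)

theory Defs
  imports "HOL-Computational_Algebra.Polynomial" Complex_Main
begin

definition gbinom :: "real \<Rightarrow> int \<Rightarrow> real" where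
  "gbinom a m = (if m < 0 then 0 else a gchoose (nat m))"

definition jacobi_poly :: "nat \<Rightarrow> real \<Rightarrow> real \<Rightarrow> real poly" where
  "jacobi_poly n a b =
     (\<Sum>s\<le>n. smult (((real n + a) gchoose (n - s)) * ((real n + b) gchoose s))
                    ([:-1/2, 1/2:] ^ s * [:1/2, 1/2:] ^ (n - s)))"

definition koorn_C0 :: "nat \<Rightarrow> real \<Rightarrow> real \<Rightarrow> real" where
  "koorn_C0 n \<alpha> M = 1 + M * (2 * real n / (\<alpha> + 1)) * gbinom (real n + 2*\<alpha> + 1) (int n)
      + 4 * M^2 * (gbinom (real n + 2*\<alpha> + 1) (int n - 1))^2"

definition koorn_C1 :: "nat \<Rightarrow> real \<Rightarrow> real \<Rightarrow> real" where
  "koorn_C1 n \<alpha> M = (2 * M / (2*\<alpha> + 1)) * gbinom (real n + 2*\<alpha>) (int n)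
      + (2 * M^2 / (\<alpha> + 1)) * gbinom (real n + 2*\<alpha>) (int n - 1) * gbinom (real n + 2*\<alpha> + 1) (int n)"

definition koornwinder_sym :: "nat \<Rightarrow> real \<Rightarrow> real \<Rightarrow> real poly" where
  "koornwinder_sym n \<alpha> M =
     smult (koorn_C0 n \<alpha> M) (jacobi_poly n \<alpha> \<alpha>)
     - smult (koorn_C1 n \<alpha> M) ([:0, 1:] * pderiv (jacobi_poly n \<alpha> \<alpha>))"

definition bcoef :: "nat \<Rightarrow> nat \<Rightarrow> real \<Rightarrow> real" where
  "bcoef n i x = (if i = 0 then (1 - (-1) ^ n) / 2 else 2 ^ (i - 1) / fact i * (-x) ^ i)"

end

theory Submission
  imports Defs
begin

text \<open>
  Up to the correction of the constant term, \<open>b\<^sub>i(x) = (-2x)\<^sup>i / (2 i!)\<close>, so the series is half the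
  Taylor expansion of \<open>y\<close> at \<open>x\<close> with increment \<open>-2x\<close>, minus \<open>(-1)\<^sup>n y(x)/2\<close>; it equals
  \<open>(y(-x) - (-1)\<^sup>n y(x))/2\<close>. This vanishes because the symmetric Jacobi polynomial of degree \<open>n\<close>
  has the parity of \<open>n\<close> and \<open>x d/dx\<close> preserves parity. No hypothesis on \<open>\<alpha>\<close> or \<open>M\<close> is needed.
\<close>

lemma higher_pderiv_eq_0:
  fixes p :: "'a::{comm_semiring_1,semiring_no_zero_divisors} poly"
  assumes "degree p < m"
  shows "(pderiv ^^ m) p = 0"
proof (rule poly_eqI)
  fix k
  have "coeff p (k + m) = 0" using assms by (intro coeff_eq_0) simp
  then show "coeff ((pderiv ^^ m) p) k = coeff 0 k" by (simp add: coeff_higher_pderiv)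
qed

lemma poly_Taylor_sums:
  fixes p :: "real poly"
  shows "(\<lambda>m. poly ((pderiv ^^ m) p) x / fact m * h ^ m) sums poly p (x + h)"
proof -
  let ?diff = "\<lambda>m t. poly ((pderiv ^^ m) p) (x + t)"
  have "DERIV (?diff m) t :> ?diff (Suc m) t" for m t
    using DERIV_chain2[OF poly_DERIV DERIV_add[OF DERIV_const DERIV_ident]] by simp
  then obtain t where "?diff 0 h = (\<Sum>m<Suc (degree p). ?diff m 0 / fact m * h ^ m)
      + ?diff (Suc (degree p)) t / fact (Suc (degree p)) * h ^ Suc (degree p)"
    using Maclaurin_all_le[of ?diff "?diff 0"] by blast
  then have "poly p (x + h) = (\<Sum>m\<in>{..degree p}. poly ((pderiv ^^ m) p) x / fact m * h ^ m)"
    by (simp add: higher_pderiv_eq_0 lessThan_Suc_atMost del: funpow.simps)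
  moreover have "(\<lambda>m. poly ((pderiv ^^ m) p) x / fact m * h ^ m)
      sums (\<Sum>m\<in>{..degree p}. poly ((pderiv ^^ m) p) x / fact m * h ^ m)"
    by (rule sums_finite) (simp_all add: higher_pderiv_eq_0)
  ultimately show ?thesis by simp
qed

lemma pcompose_power_left:
  fixes p :: "'a::comm_semiring_1 poly"
  shows "(p ^ k) \<circ>\<^sub>p q = (p \<circ>\<^sub>p q) ^ k"
  by (induction k) (simp_all add: pcompose_1 pcompose_mult)

lemma jacobi_poly_reflect:
  "jacobi_poly n a b \<circ>\<^sub>p [:0, -1:] = smult ((-1) ^ n) (jacobi_poly n b a)"
proof -
  let ?c = "\<lambda>a b s. ((real n + a) gchoose (n - s)) * ((real n + b) gchoose s)"
  let ?u = "[:-1/2, 1/2:] :: real poly" and ?v = "[:1/2, 1/2:] :: real poly"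
  have reflect_u: "?u \<circ>\<^sub>p [:0, -1:] = smult (-1) ?v"
    and reflect_v: "?v \<circ>\<^sub>p [:0, -1:] = smult (-1) ?u"
    by (simp_all add: pcompose_pCons)
  have sign: "(-1) ^ s * (-1) ^ (n - s) = ((-1) ^ n :: real)" if "s \<le> n" for s
    using that by (simp flip: power_add)
  have "jacobi_poly n a b \<circ>\<^sub>p [:0, -1:]
      = (\<Sum>s\<le>n. smult (?c a b s) (smult (-1) ?v ^ s * smult (-1) ?u ^ (n - s)))"
    unfolding jacobi_poly_def pcompose_sum pcompose_smult pcompose_mult pcompose_power_left
      reflect_u reflect_v by (rule refl)
  also have "\<dots> = (\<Sum>s\<le>n. [:(-1) ^ n:] * smult (?c a b s) (?v ^ s * ?u ^ (n - s)))"
    unfolding smult_power mult_smult_left mult_smult_right smult_smult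
    by (intro sum.cong refl) (simp add: sign mult.commute)
  also have "\<dots> = smult ((-1) ^ n) (\<Sum>s\<le>n. smult (?c a b s) (?v ^ s * ?u ^ (n - s)))"
    unfolding sum_distrib_left[symmetric] by simp
  also have "(\<Sum>s\<le>n. smult (?c a b s) (?v ^ s * ?u ^ (n - s))) = jacobi_poly n b a"
    unfolding jacobi_poly_def
    by (rule sum.reindex_bij_witness[where i = "\<lambda>s. n - s" and j = "\<lambda>s. n - s"])
      (auto simp: mult.commute)
  finally show ?thesis .
qed

lemma x_pderiv_reflect:
  fixes p :: "'a::idom poly"
  shows "([:0, 1:] * pderiv p) \<circ>\<^sub>p [:0, -1:] = [:0, 1:] * pderiv (p \<circ>\<^sub>p [:0, -1:])"
  by (simp add: pcompose_mult pderiv_pcompose pcompose_pCons pderiv_pCons)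

lemma koornwinder_sym_reflect:
  "koornwinder_sym n \<alpha> M \<circ>\<^sub>p [:0, -1:] = smult ((-1) ^ n) (koornwinder_sym n \<alpha> M)"
  unfolding koornwinder_sym_def pcompose_diff pcompose_smult x_pderiv_reflect jacobi_poly_reflect
  by (simp add: pderiv_smult smult_diff_right mult.commute)

lemma poly_koornwinder_sym_minus:
  "poly (koornwinder_sym n \<alpha> M) (- x) = (-1) ^ n * poly (koornwinder_sym n \<alpha> M) x"
  using arg_cong[OF koornwinder_sym_reflect, of "\<lambda>p. poly p x"] by (simp add: poly_pcompose)

lemma bcoef_eq:
  "bcoef n i x = (-2 * x) ^ i / (2 * fact i) - (if i = 0 then (-1) ^ n / 2 else 0)"
proof (cases i)
  case (Suc k)
  have "(-2 * x) ^ i = 2 ^ i * (-x) ^ i"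
    by (simp flip: power_mult_distrib)
  then show ?thesis
    using Suc by (simp add: bcoef_def power_Suc[of "2::real"] del: power_Suc)
qed (simp add: bcoef_def field_simps)

theorem theorem4:
  fixes \<alpha> M x :: real and n :: nat
  assumes "\<alpha> > -1" and "M \<ge> 0"
  shows "(\<Sum>i. bcoef n i x * poly ((pderiv ^^ i) (koornwinder_sym n \<alpha> M)) x) = 0"
proof -
  define y where "y = koornwinder_sym n \<alpha> M"
  define Y where "Y i = poly ((pderiv ^^ i) y) x" for i
  have "(\<lambda>i. Y i / fact i * (-2 * x) ^ i) sums poly y (-x)"
    using poly_Taylor_sums[of y x "-2 * x"] by (simp add: Y_def)
  then have "(\<lambda>i. Y i / fact i * (-2 * x) ^ i / 2 - (if i = 0 then (-1) ^ n / 2 * Y i else 0))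
      sums (poly y (-x) / 2 - (-1) ^ n / 2 * Y 0)"
    by (intro sums_diff sums_divide sums_single)
  also have "poly y (-x) / 2 - (-1) ^ n / 2 * Y 0 = 0"
    by (simp add: y_def Y_def poly_koornwinder_sym_minus)
  also have "(\<lambda>i. Y i / fact i * (-2 * x) ^ i / 2 - (if i = 0 then (-1) ^ n / 2 * Y i else 0))
      = (\<lambda>i. bcoef n i x * Y i)"
    by (auto simp: bcoef_eq field_simps)
  finally have "(\<lambda>i. bcoef n i x * Y i) sums 0" .
  then show ?thesis
    by (simp add: sums_unique[symmetric] Y_def y_def)
qed

end
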